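(* Let $T\in C^{\mathrm{Lip}}_{d-1}(\mathbb{R}^N;\mathbb{Z})$ and let $U\in C^{\mathrm{Lip}}_{d}(\mathbb{R}^N;\mathbb{Z})$ satisfy $\partial U=2T$. Then the reduction $U\bmod 2\in C^{\mathrm{Lip}}_{d}(\mathbb{R}^N;\mathbb{Z}/2)$ is a mod-2 cycle, and \[\mathrm{FV}(T)\le\frac{\mathrm{mass}\,U+\mathrm{NOA}(U\bmod 2)}{2}.\]
   Context: For $\mathbb{K}\in\{\mathbb{Z},\mathbb{Z}/2\}$ (norm: usual absolute value on $\mathbb{Z}$; $|0|=0,|1|=1$ on $\mathbb{Z}/2$), a Lipschitz $d$-chain $A\in C^{\mathrm{Lip}}_d(\mathbb{R}^N;\mathbb{K})$ is a finite formal sum $\sum_i a_i\alpha_i$, $a_i\in\mathbb{K}$, $\alpha_i$ Lipschitz maps from the standard $d$-simplex $\Delta$ into $\mathbb{R}^N$, with the singular boundary operator; $\mathrm{mass}\,A=\sum_i|a_i|\int_\Delta|J_{\alpha_i}|$. $\mathrm{FV}(T)=\inf\{\mathrm{mass}\,V: V\in C^{\mathrm{Lip}}_{d}(\mathbb{R}^N;\mathbb{Z}),\ \partial V=T\}$. For a mod-2 Lipschitz $d$-cycle $A\in C^{\mathrm{Lip}}_d(\mathbb{R}^N;\mathbb{Z}/2)$, a pseudo-orientation of $A$ is an $R\in C^{\mathrm{Lip}}_d(\mathbb{R}^N;\mathbb{Z})$ with $\partial R=0$ and $R\equiv A \pmod 2$; the nonorientability area is $\mathrm{NOA}(A)=\inf\{\mathrm{mass}\,R: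 R \text{ a pseudo-orientation of } A\}$. *)

theory Defs
  imports "HOL-Analysis.Analysis" "HOL-Library.Z2"
begin

text \<open>Points of R^d are represented as functions nat => real that vanish at
  all coordinates j >= d.  The standard d-simplex is conv {0, e_0, ..., e_(d-1)}.\<close>

definition std_simplex :: "nat \<Rightarrow> (nat \<Rightarrow> real) set" where
  "std_simplex d = {x. (\<forall>j\<ge>d. x j = 0) \<and> (\<forall>j<d. 0 \<le> x j) \<and> (\<Sum>j<d. x j) \<le> 1}"

definition enorm :: "nat \<Rightarrow> (nat \<Rightarrow> real) \<Rightarrow> real" where
  "enorm d h = sqrt (\<Sum>j<d. (h j)\<^sup>2)"

text \<open>Lipschitz singular d-simplex in R^N, canonically extended by 0 off the simplex
  (so that two maps agreeing on the simplex are the same simplex).\<close>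
definition lip_simplex :: "nat \<Rightarrow> ((nat \<Rightarrow> real) \<Rightarrow> real^'n) \<Rightarrow> bool" where
  "lip_simplex d \<sigma> \<longleftrightarrow>
     (\<exists>L. \<forall>x\<in>std_simplex d. \<forall>y\<in>std_simplex d. dist (\<sigma> x) (\<sigma> y) \<le> L * enorm d (\<lambda>j. x j - y j))
     \<and> (\<forall>x. x \<notin> std_simplex d \<longrightarrow> \<sigma> x = 0)"

definition lchain :: "nat \<Rightarrow> (((nat \<Rightarrow> real) \<Rightarrow> real^'n) \<Rightarrow> 'k::zero) \<Rightarrow> bool" where
  "lchain d c \<longleftrightarrow> finite {\<sigma>. c \<sigma> \<noteq> 0} \<and> (\<forall>\<sigma>. c \<sigma> \<noteq> 0 \<longrightarrow> lip_simplex d \<sigma>)"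

text \<open>i-th face map Delta_(d-1) -> Delta_d (affine, vertex order preserving,
  omitting vertex v_i, where v_0 = 0 and v_(j+1) = e_j).\<close>
definition face_map :: "nat \<Rightarrow> nat \<Rightarrow> (nat \<Rightarrow> real) \<Rightarrow> (nat \<Rightarrow> real)" where
  "face_map d i y = (\<lambda>j. if d \<le> j then 0
      else if i = 0 then (if j = 0 then 1 - (\<Sum>k<d-1. y k) else y (j - 1))
      else if j + 1 < i then y j else if j + 1 = i then 0 else y (j - 1))"

definition face :: "nat \<Rightarrow> ((nat \<Rightarrow> real) \<Rightarrow> real^'n) \<Rightarrow> nat \<Rightarrow> ((nat \<Rightarrow> real) \<Rightarrow> real^'n)" where
  "face d \<sigma> i = (\<lambda>y. if y \<in> std_simplex (d - 1) then \<sigma> (face_map d i y) else 0)"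

definition bd :: "nat \<Rightarrow> (((nat \<Rightarrow> real) \<Rightarrow> real^'n) \<Rightarrow> 'k::comm_ring_1)
                   \<Rightarrow> (((nat \<Rightarrow> real) \<Rightarrow> real^'n) \<Rightarrow> 'k)" where
  "bd d c = (\<lambda>\<tau>. if d = 0 then 0 else
      (\<Sum>\<sigma>\<in>{\<sigma>. c \<sigma> \<noteq> 0}. \<Sum>i\<le>d. (-1) ^ i * c \<sigma> * (if face d \<sigma> i = \<tau> then 1 else 0)))"

definition mod2 :: "(((nat \<Rightarrow> real) \<Rightarrow> real^'n) \<Rightarrow> int) \<Rightarrow> (((nat \<Rightarrow> real) \<Rightarrow> real^'n) \<Rightarrow> bit)" where
  "mod2 c = (\<lambda>\<sigma>. of_int (c \<sigma>))"

definition has_deriv_at :: "nat \<Rightarrow> ((nat \<Rightarrow> real) \<Rightarrow> real^'n) \<Rightarrow> (nat \<Rightarrow> real) \<Rightarrow> (nat \<Rightarrow> real^'n) \<Rightarrow> bool" where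
  "has_deriv_at d \<sigma> x D \<longleftrightarrow>
     (\<forall>e>0. \<exists>\<delta>>0. \<forall>h. (\<forall>j\<ge>d. h j = 0) \<and> 0 < enorm d h \<and> enorm d h < \<delta> \<longrightarrow>
        norm (\<sigma> (\<lambda>j. x j + h j) - \<sigma> x - (\<Sum>j<d. h j *\<^sub>R D j)) \<le> e * enorm d h)"

definition det_nat :: "nat \<Rightarrow> (nat \<Rightarrow> nat \<Rightarrow> real) \<Rightarrow> real" where
  "det_nat d M = (\<Sum>p\<in>{p. p permutes {..<d}}. of_int (sign p) * (\<Prod>i<d. M i (p i)))"

text \<open>|J_sigma|(x) = sqrt (det (D sigma^T D sigma)) where sigma is differentiable
  (Lipschitz maps are differentiable a.e. by Rademacher), 0 elsewhere.\<close>
definition jac :: "nat \<Rightarrow> ((nat \<Rightarrow> real) \<Rightarrow> real^'n) \<Rightarrow> (nat \<Rightarrow> real) \<Rightarrow> real" where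
  "jac d \<sigma> x = (if \<exists>D. has_deriv_at d \<sigma> x D
      then (let D = (SOME D. has_deriv_at d \<sigma> x D) in sqrt (det_nat d (\<lambda>i j. D i \<bullet> D j)))
      else 0)"

definition ext0 :: "nat \<Rightarrow> (nat \<Rightarrow> real) \<Rightarrow> (nat \<Rightarrow> real)" where
  "ext0 d x = (\<lambda>j. if j < d then x j else 0)"

definition simplex_vol :: "nat \<Rightarrow> ((nat \<Rightarrow> real) \<Rightarrow> real^'n) \<Rightarrow> real" where
  "simplex_vol d \<sigma> = integral\<^sup>L (completion (PiM {..<d} (\<lambda>_. lborel)))
      (\<lambda>x. indicator (std_simplex d) (ext0 d x) * jac d \<sigma> (ext0 d x))"

definition mass :: "nat \<Rightarrow> (((nat \<Rightarrow> real) \<Rightarrow> real^'n) \<Rightarrow> int) \<Rightarrow> real" where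
  "mass d c = (\<Sum>\<sigma>\<in>{\<sigma>. c \<sigma> \<noteq> 0}. \<bar>real_of_int (c \<sigma>)\<bar> * simplex_vol d \<sigma>)"

definition FV :: "nat \<Rightarrow> (((nat \<Rightarrow> real) \<Rightarrow> real^'n) \<Rightarrow> int) \<Rightarrow> real" where
  "FV d T = Inf {mass d V | V. lchain d V \<and> bd d V = T}"

definition NOA :: "nat \<Rightarrow> (((nat \<Rightarrow> real) \<Rightarrow> real^'n) \<Rightarrow> bit) \<Rightarrow> real" where
  "NOA d A = Inf {mass d R | R. lchain d R \<and> bd d R = (\<lambda>_. 0) \<and> mod2 R = A}"

end

theory Submission
  imports Defs "Jordan_Normal_Form.Jordan_Normal_Form_Existence"
begin

text \<open>If \<open>R\<close> is a pseudo-orientation of \<open>U mod 2\<close>, then \<open>U - R = 2 W\<close> for an integral chain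
  \<open>W\<close> with \<open>\<partial> W = T\<close> and \<open>mass W \<le> (mass U + mass R) / 2\<close>; taking the infimum over \<open>R\<close>
  gives the bound. The infimum defining \<open>NOA\<close> is over a nonempty set because \<open>\<partial> (cone U) =
  U - 2 cone T\<close>, for the cone with apex at the origin, is a pseudo-orientation; and the infimum
  defining \<open>FV\<close> is bounded below since masses are nonnegative, Gram determinants being
  nonnegative.\<close>

abbreviation chain_support :: "('a \<Rightarrow> 'k::zero) \<Rightarrow> 'a set" where
  "chain_support c \<equiv> {x. c x \<noteq> 0}"

lemma sum_if_eq_mult:
  fixes h :: "'a \<Rightarrow> 'k::comm_ring_1"
  assumes "finite F" "a \<in> F"
  shows "(\<Sum>x\<in>F. (if a = x then 1 else 0) * h x) = h a"
proof -
  have "(\<Sum>x\<in>F. (if a = x then 1 else 0) * h x) = (\<Sum>x\<in>F. if a = x then h x else 0)"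
    by (rule sum.cong) auto
  also have "\<dots> = h a" using assms by (simp add: sum.delta)
  finally show ?thesis .
qed

lemma lchain_support_subset:
  assumes "lchain d a" "lchain d b" "chain_support c \<subseteq> chain_support a \<union> chain_support b"
  shows "lchain d c"
proof -
  have "finite (chain_support c)"
    by (rule finite_subset[OF assms(3)]) (use assms(1,2) in \<open>simp add: lchain_def\<close>)
  then show ?thesis using assms unfolding lchain_def by blast
qed

section \<open>The boundary operator\<close>

definition simplex_bd :: "nat \<Rightarrow> ((nat \<Rightarrow> real) \<Rightarrow> real^'n) \<Rightarrow> ((nat \<Rightarrow> real) \<Rightarrow> real^'n) \<Rightarrow> 'k::comm_ring_1" where
  "simplex_bd d \<sigma> \<tau> = (\<Sum>i\<le>d. (-1) ^ i * (if face d \<sigma> i = \<tau> then 1 else 0))"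

definition faces :: "nat \<Rightarrow> ((nat \<Rightarrow> real) \<Rightarrow> real^'n) set \<Rightarrow> ((nat \<Rightarrow> real) \<Rightarrow> real^'n) set" where
  "faces d S = (\<lambda>(\<sigma>, i). face d \<sigma> i) ` (S \<times> {..d})"

lemma finite_faces: "finite S \<Longrightarrow> finite (faces d S)"
  by (simp add: faces_def)

lemma face_in_faces: "\<sigma> \<in> S \<Longrightarrow> i \<le> d \<Longrightarrow> face d \<sigma> i \<in> faces d S"
  by (force simp: faces_def)

lemma bd_eq_sum_simplex_bd:
  fixes c :: "((nat \<Rightarrow> real) \<Rightarrow> real^'n) \<Rightarrow> 'k::comm_ring_1"
  assumes "d \<noteq> 0" "finite S" "chain_support c \<subseteq> S"
  shows "bd d c \<tau> = (\<Sum>\<sigma>\<in>S. c \<sigma> * simplex_bd d \<sigma> \<tau>)"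
proof -
  have "bd d c \<tau> = (\<Sum>\<sigma>\<in>chain_support c. c \<sigma> * simplex_bd d \<sigma> \<tau>)"
    using assms(1) unfolding bd_def simplex_bd_def by (simp add: sum_distrib_left ac_simps)
  also have "\<dots> = (\<Sum>\<sigma>\<in>S. c \<sigma> * simplex_bd d \<sigma> \<tau>)"
    by (rule sum.mono_neutral_left) (use assms in auto)
  finally show ?thesis .
qed

lemma support_bd_subset: "chain_support (bd d c) \<subseteq> faces d (chain_support c)"
proof
  fix \<tau> assume "\<tau> \<in> chain_support (bd d c)"
  then have "(\<Sum>\<sigma>\<in>chain_support c. \<Sum>i\<le>d. (-1) ^ i * c \<sigma> * (if face d \<sigma> i = \<tau> then 1 else 0)) \<noteq> 0"
    by (auto simp: bd_def split: if_splits)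
  then obtain \<sigma> where \<sigma>: "\<sigma> \<in> chain_support c"
    and "(\<Sum>i\<le>d. (-1) ^ i * c \<sigma> * (if face d \<sigma> i = \<tau> then 1 else 0)) \<noteq> 0"
    by (meson sum.not_neutral_contains_not_neutral)
  then obtain i where i: "i \<le> d"
    and "(-1) ^ i * c \<sigma> * (if face d \<sigma> i = \<tau> then 1 else 0) \<noteq> 0"
    by (meson atMost_iff sum.not_neutral_contains_not_neutral)
  then have "face d \<sigma> i = \<tau>" by (simp split: if_splits)
  with face_in_faces[OF \<sigma> i] show "\<tau> \<in> faces d (chain_support c)" by simp
qed

lemma sum_simplex_bd_mult:
  fixes g :: "((nat \<Rightarrow> real) \<Rightarrow> real^'n) \<Rightarrow> 'k::comm_ring_1"
  assumes "finite F" "\<And>i. i \<le> d \<Longrightarrow> face d \<sigma> i \<in> F"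
  shows "(\<Sum>\<tau>\<in>F. simplex_bd d \<sigma> \<tau> * g \<tau>) = (\<Sum>i\<le>d. (-1) ^ i * g (face d \<sigma> i))"
proof -
  have "(\<Sum>\<tau>\<in>F. simplex_bd d \<sigma> \<tau> * g \<tau>)
      = (\<Sum>i\<le>d. (-1) ^ i * (\<Sum>\<tau>\<in>F. (if face d \<sigma> i = \<tau> then 1 else 0) * g \<tau>))"
    unfolding simplex_bd_def sum_distrib_right sum_distrib_left
    by (subst sum.swap) (simp add: mult.assoc)
  also have "\<dots> = (\<Sum>i\<le>d. (-1) ^ i * g (face d \<sigma> i))"
    using assms by (simp add: sum_if_eq_mult)
  finally show ?thesis .
qed

lemma sum_bd_mult:
  fixes c g :: "((nat \<Rightarrow> real) \<Rightarrow> real^'n) \<Rightarrow> 'k::comm_ring_1"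
  assumes "d \<noteq> 0" "finite (chain_support c)" "finite F" "faces d (chain_support c) \<subseteq> F"
  shows "(\<Sum>\<tau>\<in>F. bd d c \<tau> * g \<tau>)
       = (\<Sum>\<sigma>\<in>chain_support c. c \<sigma> * (\<Sum>i\<le>d. (-1) ^ i * g (face d \<sigma> i)))"
proof -
  have "(\<Sum>\<tau>\<in>F. bd d c \<tau> * g \<tau>) = (\<Sum>\<tau>\<in>F. \<Sum>\<sigma>\<in>chain_support c. c \<sigma> * (simplex_bd d \<sigma> \<tau> * g \<tau>))"
    using bd_eq_sum_simplex_bd[OF assms(1,2) order_refl] by (simp add: sum_distrib_right mult.assoc)
  also have "\<dots> = (\<Sum>\<sigma>\<in>chain_support c. c \<sigma> * (\<Sum>\<tau>\<in>F. simplex_bd d \<sigma> \<tau> * g \<tau>))"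
    unfolding sum_distrib_left by (rule sum.swap)
  also have "\<dots> = (\<Sum>\<sigma>\<in>chain_support c. c \<sigma> * (\<Sum>i\<le>d. (-1) ^ i * g (face d \<sigma> i)))"
  proof (rule sum.cong[OF refl])
    fix \<sigma> assume \<sigma>: "\<sigma> \<in> chain_support c"
    have "face d \<sigma> i \<in> F" if "i \<le> d" for i using assms(4) face_in_faces[OF \<sigma> that] by blast
    then show "c \<sigma> * (\<Sum>\<tau>\<in>F. simplex_bd d \<sigma> \<tau> * g \<tau>) = c \<sigma> * (\<Sum>i\<le>d. (-1) ^ i * g (face d \<sigma> i))"
      by (simp add: sum_simplex_bd_mult[OF assms(3)])
  qed
  finally show ?thesis .
qed

lemma bd_lincomb:
  fixes a b :: "((nat \<Rightarrow> real) \<Rightarrow> real^'n) \<Rightarrow> 'k::comm_ring_1"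
  assumes "finite (chain_support a)" "finite (chain_support b)"
  shows "bd d (\<lambda>\<sigma>. p * a \<sigma> + q * b \<sigma>) = (\<lambda>\<tau>. p * bd d a \<tau> + q * bd d b \<tau>)"
proof (cases "d = 0")
  case True
  then show ?thesis by (simp add: bd_def)
next
  case False
  define S where "S = chain_support a \<union> chain_support b"
  have S: "finite S" "chain_support a \<subseteq> S" "chain_support b \<subseteq> S"
    "chain_support (\<lambda>\<sigma>. p * a \<sigma> + q * b \<sigma>) \<subseteq> S"
    using assms by (auto simp: S_def)
  show ?thesis
  proof
    fix \<tau>
    have "bd d (\<lambda>\<sigma>. p * a \<sigma> + q * b \<sigma>) \<tau> = (\<Sum>\<sigma>\<in>S. (p * a \<sigma> + q * b \<sigma>) * simplex_bd d \<sigma> \<tau>)"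
      by (rule bd_eq_sum_simplex_bd[OF False S(1,4)])
    also have "\<dots> = p * (\<Sum>\<sigma>\<in>S. a \<sigma> * simplex_bd d \<sigma> \<tau>) + q * (\<Sum>\<sigma>\<in>S. b \<sigma> * simplex_bd d \<sigma> \<tau>)"
      unfolding sum_distrib_left sum.distrib[symmetric] by (rule sum.cong) (simp_all add: algebra_simps)
    also have "\<dots> = p * bd d a \<tau> + q * bd d b \<tau>"
      unfolding bd_eq_sum_simplex_bd[OF False S(1,2)] bd_eq_sum_simplex_bd[OF False S(1,3)] ..
    finally show "bd d (\<lambda>\<sigma>. p * a \<sigma> + q * b \<sigma>) \<tau> = p * bd d a \<tau> + q * bd d b \<tau>" .
  qed
qed

lemma simplex_bd_of_int: "(simplex_bd d \<sigma> \<tau> :: 'k::comm_ring_1) = of_int (simplex_bd d \<sigma> \<tau>)"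
  unfolding simplex_bd_def of_int_sum by (intro sum.cong refl) simp

lemma of_int_bit: "(of_int k :: bit) = (if even k then 0 else 1)"
  by (cases "even k") (auto elim!: evenE oddE)

lemma bd_mod2:
  fixes c :: "((nat \<Rightarrow> real) \<Rightarrow> real^'n) \<Rightarrow> int"
  assumes "finite (chain_support c)"
  shows "bd d (mod2 c) = mod2 (bd d c)"
proof (cases "d = 0")
  case True
  then show ?thesis by (simp add: bd_def mod2_def)
next
  case False
  have supp: "chain_support (mod2 c) \<subseteq> chain_support c" by (auto simp: mod2_def)
  show ?thesis
  proof
    fix \<tau>
    have "bd d (mod2 c) \<tau> = (\<Sum>\<sigma>\<in>chain_support c. mod2 c \<sigma> * simplex_bd d \<sigma> \<tau>)"
      by (rule bd_eq_sum_simplex_bd[OF False assms supp])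
    also have "\<dots> = mod2 (bd d c) \<tau>"
      unfolding bd_eq_sum_simplex_bd[OF False assms order_refl] mod2_def
      by (simp add: of_int_sum simplex_bd_of_int[where 'k=bit])
    finally show "bd d (mod2 c) \<tau> = mod2 (bd d c) \<tau>" .
  qed
qed

lemma sum_skip_coordinate:
  fixes y :: "nat \<Rightarrow> real"
  assumes "1 \<le> i"
  shows "(\<Sum>j<n. if j + 1 < i then y j else if j + 1 = i then 0 else y (j - 1))
       = (if n < i then \<Sum>k<n. y k else \<Sum>k<n - 1. y k)"
proof (induction n)
  case 0
  then show ?case by simp
next
  case (Suc n)
  consider "Suc n < i" | "Suc n = i" | "i < Suc n" by linarith
  then show ?case
  proof cases
    case 1
    then show ?thesis using Suc by simp
  next
    case 2
    have "(\<Sum>j<Suc n. if j + 1 < i then y j else if j + 1 = i then 0 else y (j - 1))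
        = (\<Sum>j<n. if j + 1 < i then y j else if j + 1 = i then 0 else y (j - 1)) + 0"
      unfolding sum.lessThan_Suc using 2 by simp
    then show ?thesis using Suc by (simp add: 2[symmetric])
  next
    case 3
    then obtain m where "n = Suc m" using assms by (cases n) auto
    then show ?thesis using Suc 3 by simp
  qed
qed

lemma sum_face_map:
  assumes "1 \<le> d" "i \<le> d"
  shows "(\<Sum>j<d. face_map d i y j) = (if i = 0 then 1 else \<Sum>k<d - 1. y k)"
proof (cases "i = 0")
  case True
  obtain e where e: "d = Suc e" using assms by (cases d) auto
  have "(\<Sum>j<d. face_map d i y j) = face_map d i y 0 + (\<Sum>k<e. face_map d i y (Suc k))"
    unfolding e sum.lessThan_Suc_shift by simp
  also have "\<dots> = 1" using True e by (simp add: face_map_def)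
  finally show ?thesis using True by simp
next
  case False
  have "(\<Sum>j<d. face_map d i y j)
      = (\<Sum>j<d. if j + 1 < i then y j else if j + 1 = i then 0 else y (j - 1))"
    by (rule sum.cong) (use False in \<open>auto simp: face_map_def\<close>)
  also have "\<dots> = (\<Sum>k<d - 1. y k)" using sum_skip_coordinate[of i y d] False assms by simp
  finally show ?thesis using False by simp
qed

lemma face_map_in_std_simplex:
  assumes "1 \<le> d" "i \<le> d" "y \<in> std_simplex (d - 1)"
  shows "face_map d i y \<in> std_simplex d"
proof -
  have y: "\<And>j. d - 1 \<le> j \<Longrightarrow> y j = 0" "\<And>j. j < d - 1 \<Longrightarrow> 0 \<le> y j" "(\<Sum>j<d - 1. y j) \<le> 1"
    using assms(3) by (auto simp: std_simplex_def)
  have "\<forall>j<d. 0 \<le> face_map d i y j"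
    using y assms(2) by (auto simp: face_map_def)
  then show ?thesis using sum_face_map[OF assms(1,2), of y] y(3)
    by (auto simp: std_simplex_def face_map_def)
qed

lemma face_map_face_map:
  assumes "2 \<le> d" "j < i" "i \<le> d" "z \<in> std_simplex (d - 2)"
  shows "face_map d i (face_map (d - 1) j z) = face_map d j (face_map (d - 1) (i - 1) z)"
proof
  fix m
  have z0: "\<And>k. d - 2 \<le> k \<Longrightarrow> z k = 0" using assms(4) by (auto simp: std_simplex_def)
  have S1: "(\<Sum>k<d - 1. face_map (d - 1) (i - 1) z k) = (if i - 1 = 0 then 1 else \<Sum>k<d - 1 - 1. z k)"
    by (rule sum_face_map) (use assms in auto)
  have S2: "(\<Sum>k<d - 1. face_map (d - 1) j z k) = (if j = 0 then 1 else \<Sum>k<d - 1 - 1. z k)"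
    by (rule sum_face_map) (use assms in auto)
  show "face_map d i (face_map (d - 1) j z) m = face_map d j (face_map (d - 1) (i - 1) z) m"
    unfolding face_map_def[of d] S1 S2 using assms z0 by (auto simp: face_map_def)
qed

lemma face_face:
  assumes "2 \<le> d" "j < i" "i \<le> d"
  shows "face (d - 1) (face d \<sigma> i) j = face (d - 1) (face d \<sigma> j) (i - 1)"
proof
  fix z
  have dd: "d - 1 - 1 = d - 2" by simp
  show "face (d - 1) (face d \<sigma> i) j z = face (d - 1) (face d \<sigma> j) (i - 1) z"
  proof (cases "z \<in> std_simplex (d - 2)")
    case True
    have "face_map (d - 1) j z \<in> std_simplex (d - 1)" "face_map (d - 1) (i - 1) z \<in> std_simplex (d - 1)"
      by (rule face_map_in_std_simplex; use True assms dd in auto)+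
    then show ?thesis
      using face_map_face_map[OF assms True] True unfolding face_def dd by simp
  next
    case False
    then show ?thesis unfolding face_def dd by simp
  qed
qed

text \<open>The faces of a simplex cancel in pairs: the \<open>j\<close>-th face of the \<open>i\<close>-th face (\<open>j < i\<close>)
  is the \<open>(i - 1)\<close>-th face of the \<open>j\<close>-th face, with the opposite sign.\<close>

lemma simplex_bd_bd:
  assumes "2 \<le> d"
  shows "(\<Sum>i\<le>d. (-1) ^ i * simplex_bd (d - 1) (face d \<sigma> i) \<tau>) = (0::'k::comm_ring_1)"
proof -
  define t :: "nat \<times> nat \<Rightarrow> 'k" where
    "t p = (-1) ^ (fst p + snd p) * (if face (d - 1) (face d \<sigma> (fst p)) (snd p) = \<tau> then 1 else 0)" for p
  define A where "A = {p \<in> {..d} \<times> {..d - 1}. snd p < fst p}"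
  define B where "B = {p \<in> {..d} \<times> {..d - 1}. fst p \<le> snd p}"
  have "(\<Sum>i\<le>d. (-1) ^ i * simplex_bd (d - 1) (face d \<sigma> i) \<tau>) = (\<Sum>i\<le>d. \<Sum>j\<le>d - 1. t (i, j))"
    unfolding simplex_bd_def t_def by (simp add: sum_distrib_left power_add mult.assoc)
  also have "\<dots> = sum t ({..d} \<times> {..d - 1})" by (simp add: sum.cartesian_product)
  also have "\<dots> = sum t A + sum t B"
  proof -
    have "{..d} \<times> {..d - 1} = A \<union> B" "A \<inter> B = {}" "finite A" "finite B"
      by (auto simp: A_def B_def)
    then show ?thesis by (simp add: sum.union_disjoint)
  qed
  also have "sum t A = sum (\<lambda>p. - t p) B"
  proof (rule sum.reindex_bij_witness[where j = "\<lambda>(i, j). (j, i - 1)" and i = "\<lambda>(i, j). (j + 1, i)"])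
    fix p assume "p \<in> A"
    then obtain i j where ij: "p = (i, j)" "j < i" "i \<le> d" by (auto simp: A_def)
    then obtain k where k: "i = Suc k" by (cases i) auto
    have "(-1::'k) ^ (i + j) = - ((-1) ^ (j + (i - 1)))" using k by (simp add: add.commute)
    then show "- t (case p of (i, j) \<Rightarrow> (j, i - 1)) = t p"
      using face_face[OF assms ij(2,3), of \<sigma>] ij by (simp add: t_def)
  qed (use assms in \<open>auto simp: A_def B_def\<close>)
  finally show ?thesis by (simp add: sum_negf)
qed

lemma bd_bd:
  fixes c :: "((nat \<Rightarrow> real) \<Rightarrow> real^'n) \<Rightarrow> 'k::comm_ring_1"
  assumes "2 \<le> d" "finite (chain_support c)"
  shows "bd (d - 1) (bd d c) = (\<lambda>_. 0)"
proof
  fix \<rho>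
  have "bd (d - 1) (bd d c) \<rho> = (\<Sum>\<tau>\<in>faces d (chain_support c). bd d c \<tau> * simplex_bd (d - 1) \<tau> \<rho>)"
    by (rule bd_eq_sum_simplex_bd[OF _ finite_faces[OF assms(2)] support_bd_subset]) (use assms in simp)
  also have "\<dots> = (\<Sum>\<sigma>\<in>chain_support c. c \<sigma> * (\<Sum>i\<le>d. (-1) ^ i * simplex_bd (d - 1) (face d \<sigma> i) \<rho>))"
    by (rule sum_bd_mult) (use assms finite_faces in auto)
  also have "\<dots> = 0"
    by (simp add: sum.neutral simplex_bd_bd[OF assms(1)] del: One_nat_def)
  finally show "bd (d - 1) (bd d c) \<rho> = 0" .
qed

section \<open>Nonnegativity of the mass\<close>

lemma det_eq_prod_eigenvalues:
  fixes A :: "complex mat"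
  assumes A: "A \<in> carrier_mat n n" and cp: "char_poly A = (\<Prod>a\<leftarrow>as. [:- a, 1:])"
  shows "Determinant.det A = prod_list as"
proof -
  obtain B P Q where "schur_decomposition A as = (B, P, Q)"
    by (cases "schur_decomposition A as") auto
  from schur_decomposition[OF A cp this]
  have sim: "similar_mat_wit A B P Q" and "upper_triangular B" "diag_mat B = as" by auto
  have "Determinant.det A = Determinant.det B"
    by (rule det_similar) (use sim in \<open>auto simp: similar_mat_def\<close>)
  also have "\<dots> = prod_list as"
    using det_upper_triangular[OF \<open>upper_triangular B\<close> similar_mat_witD2(5)[OF A sim]]
      \<open>diag_mat B = as\<close> by simp
  finally show ?thesis .
qed

lemma gram_eigenvalue_nonneg:
  fixes f :: "nat \<Rightarrow> 'k \<Rightarrow> real"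
  assumes "eigenvalue (mat d d (\<lambda>(i, j). complex_of_real (\<Sum>k\<in>K. f i k * f j k))) a"
  shows "Im a = 0 \<and> 0 \<le> Re a"
proof -
  define A where "A = mat d d (\<lambda>(i, j). complex_of_real (\<Sum>k\<in>K. f i k * f j k))"
  obtain v where v: "v \<in> carrier_vec d" "v \<noteq> 0\<^sub>v d" "A *\<^sub>v v = a \<cdot>\<^sub>v v"
    using assms by (auto simp: A_def eigenvalue_def eigenvector_def)
  define w where "w k = (\<Sum>j<d. complex_of_real (f j k) * v $ j)" for k
  define S where "S = (\<Sum>i<d. (A *\<^sub>v v) $ i * cnj (v $ i))"
  define X where "X = (\<Sum>k\<in>K. (Re (w k))\<^sup>2 + (Im (w k))\<^sup>2)"
  define Y where "Y = (\<Sum>i<d. (Re (v $ i))\<^sup>2 + (Im (v $ i))\<^sup>2)"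
  \<comment> \<open>\<open>S\<close> is the Hermitian form of \<open>A\<close> at \<open>v\<close>, computed once via the eigenvalue and once
    as \<open>\<Sum>k. \<bar>w k\<bar>\<^sup>2\<close>.\<close>
  have "S = a * (\<Sum>i<d. v $ i * cnj (v $ i))"
    unfolding S_def v(3) using v(1) by (simp add: sum_distrib_left mult.assoc)
  then have SY: "S = a * complex_of_real Y" unfolding Y_def by (simp add: complex_mult_cnj)
  have "S = (\<Sum>i<d. \<Sum>j<d. \<Sum>k\<in>K. complex_of_real (f i k * f j k) * v $ j * cnj (v $ i))"
    unfolding S_def A_def using v(1)
    by (simp add: scalar_prod_def atLeast0LessThan sum_distrib_right)
  also have "\<dots> = (\<Sum>k\<in>K. w k * cnj (w k))"
    unfolding w_def by (simp add: sum.swap[of _ K] cnj_sum sum_distrib_left sum_distrib_right ac_simps)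
  finally have SX: "S = complex_of_real X" unfolding X_def by (simp add: complex_mult_cnj)
  have "0 < Y"
  proof -
    obtain i where i: "i < d" "v $ i \<noteq> 0"
      using v(1,2) by (metis carrier_vecD eq_vecI index_zero_vec(1,2))
    then have "0 < (Re (v $ i))\<^sup>2 + (Im (v $ i))\<^sup>2"
      by (metis complex_eq_iff sum_power2_gt_zero_iff zero_complex.sel(1,2))
    also have "\<dots> \<le> Y" unfolding Y_def by (rule member_le_sum) (use i in auto)
    finally show ?thesis .
  qed
  moreover have "0 \<le> X" unfolding X_def by (intro sum_nonneg) auto
  moreover have "a = complex_of_real (X / Y)"
    using SX SY \<open>0 < Y\<close> by (simp add: field_simps)
  ultimately show ?thesis by simp
qed

lemma of_real_det_nat:
  "complex_of_real (det_nat d M) = Determinant.det (mat d d (\<lambda>(i, j). complex_of_real (M i j)))"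
proof -
  let ?A = "mat d d (\<lambda>(i, j). complex_of_real (M i j))"
  have "Determinant.det ?A = (\<Sum>p\<in>{p. p permutes {0..<d}}. signof p * (\<Prod>i = 0..<d. ?A $$ (i, p i)))"
    by (rule det_def') simp
  also have "\<dots> = (\<Sum>p\<in>{p. p permutes {..<d}}. complex_of_real (of_int (sign p) * (\<Prod>i<d. M i (p i))))"
  proof (rule sum.cong)
    fix p assume "p \<in> {p. p permutes {..<d}}"
    then have "\<And>i. i < d \<Longrightarrow> p i < d" using permutes_in_image by fastforce
    then have "(\<Prod>i = 0..<d. ?A $$ (i, p i)) = (\<Prod>i<d. complex_of_real (M i (p i)))"
      unfolding atLeast0LessThan by (intro prod.cong) auto
    then show "signof p * (\<Prod>i = 0..<d. ?A $$ (i, p i))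
        = complex_of_real (of_int (sign p) * (\<Prod>i<d. M i (p i)))" by simp
  qed (simp add: atLeast0LessThan)
  finally show ?thesis unfolding det_nat_def by simp
qed

lemma gram_det_nonneg:
  fixes f :: "nat \<Rightarrow> 'k \<Rightarrow> real"
  shows "0 \<le> det_nat d (\<lambda>i j. \<Sum>k\<in>K. f i k * f j k)"
proof -
  define A where "A = mat d d (\<lambda>(i, j). complex_of_real (\<Sum>k\<in>K. f i k * f j k))"
  have A: "A \<in> carrier_mat d d" by (simp add: A_def)
  obtain as where cp: "char_poly A = (\<Prod>a\<leftarrow>as. [:- a, 1:])"
    using char_poly_factorized[OF A] by blast
  have "Im a = 0 \<and> 0 \<le> Re a" if "a \<in> set as" for a
  proof -
    have "poly (char_poly A) a = 0" using that by (simp add: cp poly_prod_list prod_list_zero_iff)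
    then show ?thesis
      using gram_eigenvalue_nonneg eigenvalue_root_char_poly[OF A] unfolding A_def by blast
  qed
  then have "Im (prod_list as) = 0 \<and> 0 \<le> Re (prod_list as)"
    by (induction as) auto
  moreover have "complex_of_real (det_nat d (\<lambda>i j. \<Sum>k\<in>K. f i k * f j k)) = prod_list as"
    using of_real_det_nat[of d "\<lambda>i j. \<Sum>k\<in>K. f i k * f j k"] det_eq_prod_eigenvalues[OF A cp]
    unfolding A_def by simp
  from arg_cong[where f = Re, OF this]
  have "det_nat d (\<lambda>i j. \<Sum>k\<in>K. f i k * f j k) = Re (prod_list as)"
    by (simp only: Re_complex_of_real)
  ultimately show ?thesis by simp
qed

lemma jac_nonneg: "0 \<le> jac d \<sigma> x"
proof -
  have "0 \<le> det_nat d (\<lambda>i j. D i \<bullet> D j)" for D :: "nat \<Rightarrow> real^'n"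
    using gram_det_nonneg[of d "\<lambda>i k. D i $ k" UNIV] by (simp add: inner_vec_def)
  then show ?thesis unfolding jac_def Let_def by auto
qed

lemma simplex_vol_nonneg: "0 \<le> simplex_vol d \<sigma>"
  unfolding simplex_vol_def by (rule Bochner_Integration.integral_nonneg) (simp add: jac_nonneg indicator_def)

lemma mass_nonneg: "0 \<le> mass d c"
  unfolding mass_def by (intro sum_nonneg mult_nonneg_nonneg simplex_vol_nonneg) simp

lemma mass_eq_sum:
  assumes "finite S" "chain_support c \<subseteq> S"
  shows "mass d c = (\<Sum>\<sigma>\<in>S. \<bar>real_of_int (c \<sigma>)\<bar> * simplex_vol d \<sigma>)"
  unfolding mass_def by (rule sum.mono_neutral_left) (use assms in auto)

lemma mass_diff_le:
  assumes "finite (chain_support a)" "finite (chain_support b)"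
  shows "mass d (\<lambda>\<sigma>. a \<sigma> - b \<sigma>) \<le> mass d a + mass d b"
proof -
  define S where "S = chain_support a \<union> chain_support b"
  have S: "finite S" "chain_support a \<subseteq> S" "chain_support b \<subseteq> S"
    "chain_support (\<lambda>\<sigma>. a \<sigma> - b \<sigma>) \<subseteq> S"
    using assms by (auto simp: S_def)
  have "mass d (\<lambda>\<sigma>. a \<sigma> - b \<sigma>)
      = (\<Sum>\<sigma>\<in>S. \<bar>real_of_int (a \<sigma>) - real_of_int (b \<sigma>)\<bar> * simplex_vol d \<sigma>)"
    using mass_eq_sum[OF S(1,4)] by simp
  also have "\<dots> \<le> (\<Sum>\<sigma>\<in>S. (\<bar>real_of_int (a \<sigma>)\<bar> + \<bar>real_of_int (b \<sigma>)\<bar>) * simplex_vol d \<sigma>)"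
    by (intro sum_mono mult_right_mono abs_triangle_ineq4 simplex_vol_nonneg)
  also have "\<dots> = mass d a + mass d b"
    by (simp add: mass_eq_sum[OF S(1,2)] mass_eq_sum[OF S(1,3)] distrib_right sum.distrib)
  finally show ?thesis .
qed

lemma mass_scale:
  assumes "finite (chain_support c)"
  shows "mass d (\<lambda>\<sigma>. k * c \<sigma>) = \<bar>real_of_int k\<bar> * mass d c"
proof -
  have "chain_support (\<lambda>\<sigma>. k * c \<sigma>) \<subseteq> chain_support c" by auto
  then show ?thesis
    by (simp add: mass_eq_sum[OF assms] mass_eq_sum[OF assms order_refl] abs_mult
        sum_distrib_left mult.assoc)
qed

lemma FV_le_mass: "lchain d V \<Longrightarrow> bd d V = T \<Longrightarrow> FV d T \<le> mass d V"
  unfolding FV_def by (rule cInf_lower) (auto intro: mass_nonneg simp: bdd_below_def)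

lemma FV_le_mean_mass:
  fixes T U R :: "((nat \<Rightarrow> real) \<Rightarrow> real^'n) \<Rightarrow> int"
  assumes U: "lchain d U" "bd d U = (\<lambda>\<tau>. 2 * T \<tau>)"
    and R: "lchain d R" "bd d R = (\<lambda>_. 0)" "mod2 R = mod2 U"
  shows "FV d T \<le> (mass d U + mass d R) / 2"
proof -
  define W where "W \<sigma> = (U \<sigma> - R \<sigma>) div 2" for \<sigma>
  have "even (U \<sigma> - R \<sigma>)" for \<sigma>
    using fun_cong[OF R(3), of \<sigma>] by (auto simp: mod2_def of_int_bit split: if_splits)
  then have UR: "U \<sigma> - R \<sigma> = 2 * W \<sigma>" for \<sigma> by (simp add: W_def)
  have fin: "finite (chain_support U)" "finite (chain_support R)"
    using U(1) R(1) by (simp_all add: lchain_def)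
  have "U \<sigma> \<noteq> 0 \<or> R \<sigma> \<noteq> 0" if "W \<sigma> \<noteq> 0" for \<sigma> using UR[of \<sigma>] that by auto
  then have W: "lchain d W" by (intro lchain_support_subset[OF U(1) R(1)]) auto
  have finW: "finite (chain_support W)" using W by (simp add: lchain_def)
  have "U = (\<lambda>\<sigma>. 1 * R \<sigma> + 2 * W \<sigma>)" using UR by (auto simp: algebra_simps fun_eq_iff)
  then have "bd d U = (\<lambda>\<tau>. 1 * bd d R \<tau> + 2 * bd d W \<tau>)"
    using bd_lincomb[OF fin(2) finW] by metis
  then have "bd d W = T" using U(2) R(2) by (auto simp: fun_eq_iff)
  then have "FV d T \<le> mass d W" by (rule FV_le_mass[OF W])
  also have "mass d W = mass d (\<lambda>\<sigma>. U \<sigma> - R \<sigma>) / 2"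
    using mass_scale[OF finW, of d 2] by (simp add: UR)
  also have "\<dots> \<le> (mass d U + mass d R) / 2"
    using mass_diff_le[OF fin] by (simp add: divide_right_mono)
  finally show ?thesis .
qed

section \<open>Cones\<close>

definition coord_sum :: "nat \<Rightarrow> (nat \<Rightarrow> real) \<Rightarrow> real" where
  "coord_sum d x = (\<Sum>j<d. x j)"

definition cone_base :: "nat \<Rightarrow> (nat \<Rightarrow> real) \<Rightarrow> (nat \<Rightarrow> real)" where
  "cone_base d x = (\<lambda>k. x (Suc k) / coord_sum d x)"

text \<open>The cone over a \<open>(d - 1)\<close>-simplex \<open>\<sigma>\<close> with apex \<open>0\<close>: the vertex \<open>v\<^sub>0\<close> of \<open>\<Delta>\<^sub>d\<close> is sent
  to \<open>0\<close>, and the slice \<open>coord_sum d x = t\<close> to \<open>t\<close> times \<open>\<sigma>\<close>, so that the face opposite to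
  \<open>v\<^sub>0\<close> is \<open>\<sigma>\<close> itself.\<close>

definition simplex_cone :: "nat \<Rightarrow> ((nat \<Rightarrow> real) \<Rightarrow> real^'n) \<Rightarrow> ((nat \<Rightarrow> real) \<Rightarrow> real^'n)" where
  "simplex_cone d \<sigma> = (\<lambda>x. if x \<in> std_simplex d \<and> coord_sum d x \<noteq> 0
     then coord_sum d x *\<^sub>R \<sigma> (cone_base d x) else 0)"

lemma coord_sum_nonneg: "x \<in> std_simplex d \<Longrightarrow> 0 \<le> coord_sum d x"
  unfolding coord_sum_def std_simplex_def by (auto intro: sum_nonneg)

lemma coord_le_coord_sum:
  assumes "x \<in> std_simplex d"
  shows "0 \<le> x (Suc k) \<and> x (Suc k) \<le> coord_sum d x"
proof (cases "Suc k < d")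
  case True
  have "x (Suc k) \<le> coord_sum d x" unfolding coord_sum_def
    by (rule member_le_sum) (use assms True in \<open>auto simp: std_simplex_def\<close>)
  then show ?thesis using assms True by (auto simp: std_simplex_def)
next
  case False
  then show ?thesis using assms coord_sum_nonneg[OF assms] by (auto simp: std_simplex_def)
qed

lemma cone_base_in_std_simplex:
  assumes "1 \<le> d" "x \<in> std_simplex d" "coord_sum d x \<noteq> 0"
  shows "cone_base d x \<in> std_simplex (d - 1)"
proof -
  have pos: "0 < coord_sum d x" using coord_sum_nonneg[OF assms(2)] assms(3) by simp
  obtain e where e: "d = Suc e" using assms(1) by (cases d) auto
  have "coord_sum d x = x 0 + (\<Sum>k<d - 1. x (Suc k))"
    unfolding coord_sum_def e sum.lessThan_Suc_shift by simp
  then have "(\<Sum>k<d - 1. cone_base d x k) = (coord_sum d x - x 0) / coord_sum d x"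
    unfolding cone_base_def by (simp add: sum_divide_distrib[symmetric])
  also have "\<dots> \<le> 1" using pos assms(2) e by (auto simp: std_simplex_def)
  finally show ?thesis
    using pos coord_le_coord_sum[OF assms(2)] assms(2)
    unfolding std_simplex_def cone_base_def by auto
qed

lemma simplex_cone_eq:
  "x \<in> std_simplex d \<Longrightarrow>
   simplex_cone d \<sigma> x = (if coord_sum d x = 0 then 0 else coord_sum d x *\<^sub>R \<sigma> (cone_base d x))"
  by (simp add: simplex_cone_def)

lemma face_0_simplex_cone:
  assumes "1 \<le> d" "\<And>x. x \<notin> std_simplex (d - 1) \<Longrightarrow> \<sigma> x = 0"
  shows "face d (simplex_cone d \<sigma>) 0 = \<sigma>"
proof
  fix y
  show "face d (simplex_cone d \<sigma>) 0 y = \<sigma> y"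
  proof (cases "y \<in> std_simplex (d - 1)")
    case True
    have "face_map d 0 y \<in> std_simplex d" by (rule face_map_in_std_simplex) (use assms True in auto)
    moreover have "coord_sum d (face_map d 0 y) = 1"
      using sum_face_map[of d 0 y] assms by (simp add: coord_sum_def)
    moreover have "cone_base d (face_map d 0 y) = y"
      using True calculation(2) by (auto simp: cone_base_def face_map_def std_simplex_def)
    ultimately show ?thesis using True by (simp add: face_def simplex_cone_def)
  next
    case False
    then show ?thesis using assms(2) by (simp add: face_def)
  qed
qed

lemma cone_base_face_map:
  assumes "2 \<le> d" "1 \<le> i" "i \<le> d" "y \<in> std_simplex (d - 1)" "coord_sum (d - 1) y \<noteq> 0"
  shows "cone_base d (face_map d i y) = face_map (d - 1) (i - 1) (cone_base (d - 1) y)"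
proof
  fix m
  define t where "t = coord_sum (d - 1) y"
  have y0: "\<And>k. d - 1 \<le> k \<Longrightarrow> y k = 0" using assms(4) by (auto simp: std_simplex_def)
  obtain e where "d = Suc (Suc e)" using assms(1) by (metis add_2_eq_Suc le_Suc_ex)
  then have e: "d - 1 = Suc e" by auto
  have "t = y 0 + (\<Sum>k<e. y (Suc k))"
    unfolding t_def coord_sum_def e sum.lessThan_Suc_shift by simp
  moreover have "(\<Sum>k<d - 1 - 1. cone_base (d - 1) y k) = (\<Sum>k<e. y (Suc k)) / t"
    using e by (simp add: cone_base_def t_def sum_divide_distrib)
  moreover have "t \<noteq> 0" using assms(5) by (simp add: t_def)
  ultimately have "1 - (\<Sum>k<d - 1 - 1. cone_base (d - 1) y k) = y 0 / t"
    by (simp add: field_simps)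
  moreover have "coord_sum d (face_map d i y) = t"
    unfolding t_def coord_sum_def using sum_face_map[of d i y] assms by simp
  ultimately show "cone_base d (face_map d i y) m = face_map (d - 1) (i - 1) (cone_base (d - 1) y) m"
    using y0 assms(2,3) by (auto simp: cone_base_def face_map_def t_def)
qed

lemma face_simplex_cone:
  assumes "2 \<le> d" "1 \<le> i" "i \<le> d"
  shows "face d (simplex_cone d \<sigma>) i = simplex_cone (d - 1) (face (d - 1) \<sigma> (i - 1))"
proof
  fix y
  show "face d (simplex_cone d \<sigma>) i y = simplex_cone (d - 1) (face (d - 1) \<sigma> (i - 1)) y"
  proof (cases "y \<in> std_simplex (d - 1) \<and> coord_sum (d - 1) y \<noteq> 0")
    case True
    have x: "face_map d i y \<in> std_simplex d" by (rule face_map_in_std_simplex) (use assms True in auto)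
    have "coord_sum d (face_map d i y) = coord_sum (d - 1) y"
      unfolding coord_sum_def using sum_face_map[of d i y] assms by simp
    moreover have "cone_base (d - 1) y \<in> std_simplex (d - 1 - 1)"
      by (rule cone_base_in_std_simplex) (use assms True in auto)
    ultimately show ?thesis
      using True x cone_base_face_map[OF assms] by (simp add: face_def simplex_cone_def)
  next
    case False
    moreover have "coord_sum d (face_map d i y) = coord_sum (d - 1) y"
      unfolding coord_sum_def using sum_face_map[of d i y] assms by simp
    ultimately show ?thesis by (auto simp: face_def simplex_cone_def)
  qed
qed

lemma simplex_bd_cone:
  assumes "2 \<le> d" "\<And>x. x \<notin> std_simplex (d - 1) \<Longrightarrow> \<sigma> x = 0"
  shows "simplex_bd d (simplex_cone d \<sigma>) \<tau> = (if \<sigma> = \<tau> then 1 else 0)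
           - (\<Sum>i\<le>d - 1. (-1) ^ i * (if simplex_cone (d - 1) (face (d - 1) \<sigma> i) = \<tau> then 1 else (0::'k::comm_ring_1)))"
proof -
  obtain e where e: "d = Suc e" using assms by (cases d) auto
  have f0: "face d (simplex_cone d \<sigma>) 0 = \<sigma>" by (rule face_0_simplex_cone) (use assms in auto)
  have fs: "face d (simplex_cone d \<sigma>) (Suc i) = simplex_cone (d - 1) (face (d - 1) \<sigma> i)" if "i \<le> e" for i
    using face_simplex_cone[of d "Suc i" \<sigma>] assms that e by simp
  have "simplex_bd d (simplex_cone d \<sigma>) \<tau>
      = (\<Sum>i\<le>Suc e. (-1) ^ i * (if face d (simplex_cone d \<sigma>) i = \<tau> then 1 else (0::'k)))"
    unfolding simplex_bd_def e ..
  also have "\<dots> = (if \<sigma> = \<tau> then 1 else 0)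
      + (\<Sum>i\<le>e. (-1) ^ Suc i * (if face d (simplex_cone d \<sigma>) (Suc i) = \<tau> then 1 else 0))"
    unfolding sum.atMost_Suc_shift f0 by simp
  also have "(\<Sum>i\<le>e. (-1) ^ Suc i * (if face d (simplex_cone d \<sigma>) (Suc i) = \<tau> then 1 else (0::'k)))
      = - (\<Sum>i\<le>e. (-1) ^ i * (if simplex_cone (d - 1) (face (d - 1) \<sigma> i) = \<tau> then 1 else 0))"
    unfolding sum_negf[symmetric] by (rule sum.cong) (auto simp: fs)
  finally show ?thesis using e by simp
qed

definition cone_chain :: "nat \<Rightarrow> (((nat \<Rightarrow> real) \<Rightarrow> real^'n) \<Rightarrow> 'k::comm_ring_1)
                            \<Rightarrow> (((nat \<Rightarrow> real) \<Rightarrow> real^'n) \<Rightarrow> 'k)" where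
  "cone_chain d c = (\<lambda>\<rho>. \<Sum>\<sigma>\<in>chain_support c. c \<sigma> * (if simplex_cone d \<sigma> = \<rho> then 1 else 0))"

lemma cone_chain_eq_sum:
  assumes "finite S" "chain_support c \<subseteq> S"
  shows "cone_chain d c \<rho> = (\<Sum>\<sigma>\<in>S. c \<sigma> * (if simplex_cone d \<sigma> = \<rho> then 1 else 0))"
  unfolding cone_chain_def by (rule sum.mono_neutral_left) (use assms in auto)

lemma support_cone_chain_subset: "chain_support (cone_chain d c) \<subseteq> simplex_cone d ` chain_support c"
proof
  fix \<rho> assume "\<rho> \<in> chain_support (cone_chain d c)"
  then have "(\<Sum>\<sigma>\<in>chain_support c. c \<sigma> * (if simplex_cone d \<sigma> = \<rho> then 1 else 0)) \<noteq> 0"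
    by (simp add: cone_chain_def)
  then obtain \<sigma> where "\<sigma> \<in> chain_support c" "c \<sigma> * (if simplex_cone d \<sigma> = \<rho> then 1 else 0) \<noteq> 0"
    by (rule sum.not_neutral_contains_not_neutral)
  then show "\<rho> \<in> simplex_cone d ` chain_support c" by (auto split: if_splits)
qed

lemma sum_cone_chain_mult:
  fixes c g :: "((nat \<Rightarrow> real) \<Rightarrow> real^'n) \<Rightarrow> 'k::comm_ring_1"
  assumes "finite (chain_support c)" "finite F" "simplex_cone d ` chain_support c \<subseteq> F"
  shows "(\<Sum>\<rho>\<in>F. cone_chain d c \<rho> * g \<rho>) = (\<Sum>\<sigma>\<in>chain_support c. c \<sigma> * g (simplex_cone d \<sigma>))"
proof -
  have "(\<Sum>\<rho>\<in>F. cone_chain d c \<rho> * g \<rho>)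
      = (\<Sum>\<sigma>\<in>chain_support c. c \<sigma> * (\<Sum>\<rho>\<in>F. (if simplex_cone d \<sigma> = \<rho> then 1 else 0) * g \<rho>))"
    unfolding cone_chain_def sum_distrib_right sum_distrib_left
    by (subst sum.swap) (simp add: mult.assoc)
  also have "\<dots> = (\<Sum>\<sigma>\<in>chain_support c. c \<sigma> * g (simplex_cone d \<sigma>))"
    using assms by (intro sum.cong refl) (auto simp: sum_if_eq_mult)
  finally show ?thesis .
qed

lemma cone_chain_scale:
  fixes c :: "((nat \<Rightarrow> real) \<Rightarrow> real^'n) \<Rightarrow> 'k::comm_ring_1"
  assumes "finite (chain_support c)"
  shows "cone_chain d (\<lambda>\<sigma>. k * c \<sigma>) = (\<lambda>\<rho>. k * cone_chain d c \<rho>)"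
proof
  fix \<rho>
  have "chain_support (\<lambda>\<sigma>. k * c \<sigma>) \<subseteq> chain_support c" by auto
  then show "cone_chain d (\<lambda>\<sigma>. k * c \<sigma>) \<rho> = k * cone_chain d c \<rho>"
    by (simp add: cone_chain_eq_sum[OF assms] sum_distrib_left mult.assoc)
qed

lemma bd_cone_chain:
  fixes c :: "((nat \<Rightarrow> real) \<Rightarrow> real^'n) \<Rightarrow> 'k::comm_ring_1"
  assumes "2 \<le> d" "finite (chain_support c)"
    and "\<And>\<sigma> x. c \<sigma> \<noteq> 0 \<Longrightarrow> x \<notin> std_simplex (d - 1) \<Longrightarrow> \<sigma> x = 0"
  shows "bd d (cone_chain d c) = (\<lambda>\<tau>. c \<tau> - cone_chain (d - 1) (bd (d - 1) c) \<tau>)"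
proof
  fix \<tau>
  define S where "S = chain_support c"
  define h :: "((nat \<Rightarrow> real) \<Rightarrow> real^'n) \<Rightarrow> 'k" where
    "h \<rho> = (if simplex_cone (d - 1) \<rho> = \<tau> then 1 else 0)" for \<rho>
  have S: "finite S" using assms(2) by (simp add: S_def)
  have "bd d (cone_chain d c) \<tau> = (\<Sum>\<rho>\<in>simplex_cone d ` S. cone_chain d c \<rho> * simplex_bd d \<rho> \<tau>)"
    by (rule bd_eq_sum_simplex_bd) (use assms(1) S support_cone_chain_subset in \<open>auto simp: S_def\<close>)
  also have "\<dots> = (\<Sum>\<sigma>\<in>S. c \<sigma> * simplex_bd d (simplex_cone d \<sigma>) \<tau>)"
    unfolding S_def by (rule sum_cone_chain_mult) (use S in \<open>auto simp: S_def\<close>)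
  also have "\<dots> = (\<Sum>\<sigma>\<in>S. c \<sigma> * ((if \<sigma> = \<tau> then 1 else 0) - (\<Sum>i\<le>d - 1. (-1) ^ i * h (face (d - 1) \<sigma> i))))"
  proof (rule sum.cong[OF refl])
    fix \<sigma> assume "\<sigma> \<in> S"
    then have vanish: "\<And>x. x \<notin> std_simplex (d - 1) \<Longrightarrow> \<sigma> x = 0" using assms(3) by (auto simp: S_def)
    have "simplex_bd d (simplex_cone d \<sigma>) \<tau>
        = (if \<sigma> = \<tau> then 1 else 0) - (\<Sum>i\<le>d - 1. (-1) ^ i * h (face (d - 1) \<sigma> i))"
      unfolding h_def by (rule simplex_bd_cone[OF assms(1)]) (rule vanish)
    then show "c \<sigma> * simplex_bd d (simplex_cone d \<sigma>) \<tau>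
        = c \<sigma> * ((if \<sigma> = \<tau> then 1 else 0) - (\<Sum>i\<le>d - 1. (-1) ^ i * h (face (d - 1) \<sigma> i)))"
      by (simp add: h_def)
  qed
  also have "\<dots> = c \<tau> - (\<Sum>\<sigma>\<in>S. c \<sigma> * (\<Sum>i\<le>d - 1. (-1) ^ i * h (face (d - 1) \<sigma> i)))"
    using S by (simp add: right_diff_distrib sum_subtractf S_def if_distrib[where f = "(*) _"] sum.delta cong: if_cong)
  also have "(\<Sum>\<sigma>\<in>S. c \<sigma> * (\<Sum>i\<le>d - 1. (-1) ^ i * h (face (d - 1) \<sigma> i)))
      = (\<Sum>\<rho>\<in>faces (d - 1) S. bd (d - 1) c \<rho> * h \<rho>)"
    unfolding S_def by (rule sum_bd_mult[symmetric]) (use assms S in \<open>auto simp: S_def finite_faces\<close>)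
  also have "\<dots> = cone_chain (d - 1) (bd (d - 1) c) \<tau>"
    unfolding cone_chain_eq_sum[OF finite_faces[OF S] support_bd_subset[of "d - 1" c, folded S_def]] h_def
    by (simp add: mult.commute)
  finally show "bd d (cone_chain d c) \<tau> = c \<tau> - cone_chain (d - 1) (bd (d - 1) c) \<tau>" .
qed

section \<open>Lipschitz continuity of cones\<close>

lemma enorm_nonneg: "0 \<le> enorm n v"
  by (simp add: enorm_def sum_nonneg)

lemma abs_le_enorm: "k < n \<Longrightarrow> \<bar>v k\<bar> \<le> enorm n v"
proof -
  assume "k < n"
  then have "(v k)\<^sup>2 \<le> (\<Sum>j<n. (v j)\<^sup>2)" by (intro member_le_sum) auto
  then have "sqrt ((v k)\<^sup>2) \<le> enorm n v" unfolding enorm_def by (rule real_sqrt_le_mono)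
  then show ?thesis by simp
qed

lemma enorm_le:
  assumes "\<And>k. k < n \<Longrightarrow> \<bar>v k\<bar> \<le> B"
  shows "enorm n v \<le> real n * B"
proof (cases "n = 0")
  case True
  then show ?thesis by (simp add: enorm_def)
next
  case False
  then have B: "0 \<le> B" using assms[of 0] by auto
  have "(\<Sum>j<n. (v j)\<^sup>2) \<le> (\<Sum>j<n. B\<^sup>2)"
  proof (rule sum_mono)
    fix j assume "j \<in> {..<n}"
    then have "\<bar>v j\<bar> \<le> \<bar>B\<bar>" using assms B by auto
    then show "(v j)\<^sup>2 \<le> B\<^sup>2" by (simp add: abs_le_square_iff)
  qed
  also have "\<dots> = real n * B\<^sup>2" by simp
  also have "\<dots> \<le> (real n * B)\<^sup>2"
  proof -
    have "real n \<le> real n ^ 2" using False by (simp add: power2_eq_square)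
    then show ?thesis by (simp add: power_mult_distrib mult_right_mono)
  qed
  finally have "enorm n v \<le> sqrt ((real n * B)\<^sup>2)" unfolding enorm_def by (rule real_sqrt_le_mono)
  then show ?thesis using B by simp
qed

lemma abs_sum_diff_le_enorm: "\<bar>(\<Sum>j<n. x j) - (\<Sum>j<n. y j)\<bar> \<le> real n * enorm n (\<lambda>j. x j - y j)"
proof -
  have "\<bar>(\<Sum>j<n. x j) - (\<Sum>j<n. y j)\<bar> \<le> (\<Sum>j<n. \<bar>x j - y j\<bar>)"
    by (simp add: sum_subtractf[symmetric] sum_abs)
  also have "\<dots> \<le> (\<Sum>j<n. enorm n (\<lambda>j. x j - y j))"
    using abs_le_enorm[of _ n "\<lambda>j. x j - y j"] by (intro sum_mono) auto
  finally show ?thesis by simp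
qed

lemma abs_divide_diff_le:
  fixes a b u w :: real
  assumes "0 < u" "0 < w" "0 \<le> a" "a \<le> u"
  shows "\<bar>a / u - b / w\<bar> \<le> (\<bar>a - b\<bar> + \<bar>u - w\<bar>) / w"
proof -
  have "a / u - b / w = ((a - b) + (a / u) * (w - u)) / w"
    using assms(1,2) by (simp add: field_simps)
  moreover have "\<bar>(a / u) * (w - u)\<bar> = a / u * \<bar>u - w\<bar>"
    using assms by (simp add: abs_mult abs_minus_commute)
  moreover have "a / u * \<bar>u - w\<bar> \<le> \<bar>u - w\<bar>"
    using assms by (intro mult_left_le_one_le) auto
  ultimately show ?thesis
    using assms(2) abs_triangle_ineq[of "a - b" "(a / u) * (w - u)"]
    by (simp add: divide_right_mono)
qed

lemma norm_le_on_std_simplex: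
  assumes lip: "\<And>a b. a \<in> std_simplex k \<Longrightarrow> b \<in> std_simplex k
                  \<Longrightarrow> dist (\<sigma> a) (\<sigma> b) \<le> L * enorm k (\<lambda>j. a j - b j)"
    and "0 \<le> L" "a \<in> std_simplex k"
  shows "norm (\<sigma> a) \<le> norm (\<sigma> (\<lambda>_. 0)) + L * real k"
proof -
  have "\<bar>a j\<bar> \<le> 1" if "j < k" for j
  proof -
    have "a j \<le> (\<Sum>j<k. a j)"
      by (rule member_le_sum) (use assms(3) that in \<open>auto simp: std_simplex_def\<close>)
    then show ?thesis using assms(3) that by (auto simp: std_simplex_def)
  qed
  then have "enorm k (\<lambda>j. a j - 0) \<le> real k * 1" by (intro enorm_le) simp
  moreover have "(\<lambda>_. 0) \<in> std_simplex k" by (simp add: std_simplex_def)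
  then have "dist (\<sigma> a) (\<sigma> (\<lambda>_. 0)) \<le> L * enorm k (\<lambda>j. a j - 0)" by (rule lip[OF assms(3)])
  ultimately have "dist (\<sigma> a) (\<sigma> (\<lambda>_. 0)) \<le> L * real k"
    using mult_left_mono[OF _ assms(2)] by fastforce
  then show ?thesis using norm_triangle_ineq2[of "\<sigma> a" "\<sigma> (\<lambda>_. 0)"] by (simp add: dist_norm)
qed

text \<open>Writing \<open>s = coord_sum\<close> and \<open>p = cone_base\<close>, the difference of the cone at \<open>x\<close> and \<open>y\<close>
  is \<open>(s x - s y) \<sigma>(p x) + s y (\<sigma>(p x) - \<sigma>(p y))\<close>; the factor \<open>s y\<close> cancels the \<open>1 / s y\<close> in the
  Lipschitz estimate of \<open>p\<close>.\<close>

lemma dist_simplex_cone_le_pos: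
  assumes lip: "\<And>a b. a \<in> std_simplex (d - 1) \<Longrightarrow> b \<in> std_simplex (d - 1)
                  \<Longrightarrow> dist (\<sigma> a) (\<sigma> b) \<le> L * enorm (d - 1) (\<lambda>j. a j - b j)"
    and bound: "\<And>a. a \<in> std_simplex (d - 1) \<Longrightarrow> norm (\<sigma> a) \<le> M"
    and "0 \<le> L" "1 \<le> d"
    and x: "x \<in> std_simplex d" "0 < coord_sum d x"
    and y: "y \<in> std_simplex d" "0 < coord_sum d y"
  shows "dist (simplex_cone d \<sigma> x) (simplex_cone d \<sigma> y)
           \<le> (real d * M + L * real d * (1 + real d)) * enorm d (\<lambda>j. x j - y j)"
proof -
  define s where "s = coord_sum d"
  define p where "p = cone_base d"
  define e where "e = enorm d (\<lambda>j. x j - y j)"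
  have e: "0 \<le> e" unfolding e_def by (rule enorm_nonneg)
  have sd: "\<bar>s x - s y\<bar> \<le> real d * e"
    unfolding s_def e_def coord_sum_def by (rule abs_sum_diff_le_enorm)
  have px: "p x \<in> std_simplex (d - 1)" and py: "p y \<in> std_simplex (d - 1)"
    unfolding p_def using cone_base_in_std_simplex assms x y by auto
  have "\<bar>p x k - p y k\<bar> \<le> (e + real d * e) / s y" if "k < d - 1" for k
  proof -
    have "\<bar>x (Suc k) - y (Suc k)\<bar> \<le> e"
      unfolding e_def using abs_le_enorm[of "Suc k" d "\<lambda>j. x j - y j"] that by simp
    then show ?thesis
      using abs_divide_diff_le[of "s x" "s y" "x (Suc k)" "y (Suc k)"] coord_le_coord_sum[OF x(1), of k]
        x(2) y(2) sd unfolding p_def s_def cone_base_def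
      by (smt (verit, best) divide_right_mono)
  qed
  then have pd: "enorm (d - 1) (\<lambda>k. p x k - p y k) \<le> real (d - 1) * ((e + real d * e) / s y)"
    by (rule enorm_le)
  have "simplex_cone d \<sigma> x - simplex_cone d \<sigma> y = (s x - s y) *\<^sub>R \<sigma> (p x) + s y *\<^sub>R (\<sigma> (p x) - \<sigma> (p y))"
    using x y by (simp add: simplex_cone_eq s_def p_def algebra_simps)
  then have "dist (simplex_cone d \<sigma> x) (simplex_cone d \<sigma> y)
      \<le> \<bar>s x - s y\<bar> * norm (\<sigma> (p x)) + s y * norm (\<sigma> (p x) - \<sigma> (p y))"
    using y(2) unfolding dist_norm s_def by (metis norm_scaleR norm_triangle_ineq abs_of_pos)
  also have "\<dots> \<le> real d * e * M + s y * (L * (real (d - 1) * ((e + real d * e) / s y)))"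
  proof (intro add_mono mult_mono mult_left_mono)
    show "norm (\<sigma> (p x) - \<sigma> (p y)) \<le> L * (real (d - 1) * ((e + real d * e) / s y))"
      using lip[OF px py] mult_left_mono[OF pd \<open>0 \<le> L\<close>] by (simp add: dist_norm)
  qed (use sd bound[OF px] y(2) e in \<open>auto simp: s_def\<close>)
  also have "\<dots> = real d * e * M + L * real (d - 1) * (1 + real d) * e"
    using y(2) by (simp add: s_def field_simps)
  also have "\<dots> \<le> (real d * M + L * real d * (1 + real d)) * e"
  proof -
    have "L * real (d - 1) * (1 + real d) * e \<le> L * real d * (1 + real d) * e"
      using \<open>0 \<le> L\<close> e by (intro mult_right_mono mult_left_mono) auto
    then show ?thesis by (simp add: algebra_simps)
  qed
  finally show ?thesis unfolding e_def .
qed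

lemma dist_simplex_cone_le:
  assumes lip: "\<And>a b. a \<in> std_simplex (d - 1) \<Longrightarrow> b \<in> std_simplex (d - 1)
                  \<Longrightarrow> dist (\<sigma> a) (\<sigma> b) \<le> L * enorm (d - 1) (\<lambda>j. a j - b j)"
    and bound: "\<And>a. a \<in> std_simplex (d - 1) \<Longrightarrow> norm (\<sigma> a) \<le> M"
    and "0 \<le> L" "0 \<le> M" "1 \<le> d"
    and x: "x \<in> std_simplex d" and y: "y \<in> std_simplex d"
  shows "dist (simplex_cone d \<sigma> x) (simplex_cone d \<sigma> y)
           \<le> (real d * M + L * real d * (1 + real d)) * enorm d (\<lambda>j. x j - y j)"
proof -
  define K where "K = real d * M + L * real d * (1 + real d)"
  define e where "e = enorm d (\<lambda>j. x j - y j)"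
  have "0 \<le> e" unfolding e_def by (rule enorm_nonneg)
  have sd: "\<bar>coord_sum d x - coord_sum d y\<bar> \<le> real d * e"
    unfolding e_def coord_sum_def by (rule abs_sum_diff_le_enorm)
  have small: "norm (simplex_cone d \<sigma> a) \<le> K * e"
    if a: "a \<in> std_simplex d" and "coord_sum d a \<le> real d * e" for a
  proof (cases "coord_sum d a = 0")
    case False
    have "norm (simplex_cone d \<sigma> a) = coord_sum d a * norm (\<sigma> (cone_base d a))"
      using False coord_sum_nonneg[OF a] by (simp add: simplex_cone_eq[OF a])
    also have "\<dots> \<le> real d * e * M"
      using that coord_sum_nonneg[OF a] bound[OF cone_base_in_std_simplex[OF \<open>1 \<le> d\<close> a False]]
      by (intro mult_mono) auto
    also have "\<dots> \<le> K * e"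
      using \<open>0 \<le> e\<close> \<open>0 \<le> L\<close> by (simp add: K_def algebra_simps)
    finally show ?thesis .
  qed (use \<open>0 \<le> e\<close> \<open>0 \<le> L\<close> \<open>0 \<le> M\<close> in \<open>simp add: simplex_cone_eq[OF a] K_def\<close>)
  consider "coord_sum d x = 0" | "coord_sum d y = 0" | "0 < coord_sum d x" "0 < coord_sum d y"
    using coord_sum_nonneg[OF x] coord_sum_nonneg[OF y] by linarith
  then show ?thesis
  proof cases
    case 1
    then show ?thesis using small[OF y] sd by (simp add: simplex_cone_eq[OF x] K_def e_def)
  next
    case 2
    then show ?thesis using small[OF x] sd by (simp add: simplex_cone_eq[OF y] K_def e_def)
  next
    case 3
    show ?thesis by (rule dist_simplex_cone_le_pos[OF lip bound \<open>0 \<le> L\<close> \<open>1 \<le> d\<close> x 3(1) y 3(2)])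
  qed
qed

lemma lip_simplex_simplex_cone:
  assumes "1 \<le> d" "lip_simplex (d - 1) \<sigma>"
  shows "lip_simplex d (simplex_cone d \<sigma>)"
proof -
  obtain L where L: "\<And>a b. a \<in> std_simplex (d - 1) \<Longrightarrow> b \<in> std_simplex (d - 1)
                  \<Longrightarrow> dist (\<sigma> a) (\<sigma> b) \<le> L * enorm (d - 1) (\<lambda>j. a j - b j)"
    using assms(2) by (auto simp: lip_simplex_def)
  have lip: "dist (\<sigma> a) (\<sigma> b) \<le> \<bar>L\<bar> * enorm (d - 1) (\<lambda>j. a j - b j)"
    if "a \<in> std_simplex (d - 1)" "b \<in> std_simplex (d - 1)" for a b
    using L[OF that] mult_right_mono[OF abs_ge_self enorm_nonneg] by (rule order_trans)
  define M where "M = norm (\<sigma> (\<lambda>_. 0)) + \<bar>L\<bar> * real (d - 1)"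
  have "norm (\<sigma> a) \<le> M" if "a \<in> std_simplex (d - 1)" for a
    unfolding M_def by (rule norm_le_on_std_simplex[OF lip _ that]) auto
  moreover have "0 \<le> M" by (simp add: M_def)
  ultimately have "dist (simplex_cone d \<sigma> x) (simplex_cone d \<sigma> y)
      \<le> (real d * M + \<bar>L\<bar> * real d * (1 + real d)) * enorm d (\<lambda>j. x j - y j)"
    if "x \<in> std_simplex d" "y \<in> std_simplex d" for x y
    using dist_simplex_cone_le[OF lip] assms(1) that by auto
  then have "\<exists>K. \<forall>x\<in>std_simplex d. \<forall>y\<in>std_simplex d.
      dist (simplex_cone d \<sigma> x) (simplex_cone d \<sigma> y) \<le> K * enorm d (\<lambda>j. x j - y j)"
    by blast
  then show ?thesis unfolding lip_simplex_def by (simp add: simplex_cone_def)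
qed

lemma lchain_cone_chain:
  assumes "1 \<le> d" "lchain (d - 1) c"
  shows "lchain d (cone_chain d c)"
proof -
  have "finite (chain_support (cone_chain d c))"
    using finite_subset[OF support_cone_chain_subset] assms(2) by (auto simp: lchain_def)
  moreover have "lip_simplex d \<rho>" if "\<rho> \<in> chain_support (cone_chain d c)" for \<rho>
    using support_cone_chain_subset that lip_simplex_simplex_cone[OF assms(1)] assms(2)
    by (force simp: lchain_def)
  ultimately show ?thesis by (simp add: lchain_def)
qed

lemma exists_pseudo_orientation:
  fixes T U :: "((nat \<Rightarrow> real) \<Rightarrow> real^'n) \<Rightarrow> int"
  assumes "1 \<le> d" "lchain (d - 1) T" "lchain d U" "bd d U = (\<lambda>\<tau>. 2 * T \<tau>)"
  shows "\<exists>R. lchain d R \<and> bd d R = (\<lambda>_. 0) \<and> mod2 R = mod2 U"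
proof -
  have fin: "finite (chain_support T)" "finite (chain_support U)"
    using assms(2,3) by (simp_all add: lchain_def)
  define R where "R = bd (Suc d) (cone_chain (Suc d) U)"
  have "R = (\<lambda>\<tau>. U \<tau> - cone_chain d (bd d U) \<tau>)"
    unfolding R_def using bd_cone_chain[of "Suc d" U] assms(1,3) fin
    by (simp add: lchain_def lip_simplex_def)
  then have R: "R = (\<lambda>\<tau>. U \<tau> - 2 * cone_chain d T \<tau>)"
    using cone_chain_scale[OF fin(1), of d 2] assms(4) by simp
  have "finite (chain_support (cone_chain (Suc d) U))"
    using finite_subset[OF support_cone_chain_subset] fin(2) by blast
  then have "bd d R = (\<lambda>_. 0)" unfolding R_def using bd_bd[of "Suc d"] assms(1) by simp
  moreover have "lchain d R"
    by (rule lchain_support_subset[OF assms(3) lchain_cone_chain[OF assms(1,2)]]) (auto simp: R)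
  moreover have "mod2 R = mod2 U" by (simp add: R mod2_def of_int_bit)
  ultimately show ?thesis by blast
qed

theorem lemma1p2:
  fixes T U :: "((nat \<Rightarrow> real) \<Rightarrow> real^'n) \<Rightarrow> int" and d :: nat
  assumes "1 \<le> d"
    and "lchain (d - 1) T"
    and "lchain d U"
    and "bd d U = (\<lambda>\<tau>. 2 * T \<tau>)"
  shows "lchain d (mod2 U) \<and> bd d (mod2 U) = (\<lambda>_. 0)
         \<and> FV d T \<le> (mass d U + NOA d (mod2 U)) / 2"
proof -
  have "lchain d (mod2 U)"
    by (rule lchain_support_subset[OF assms(3) assms(3)]) (auto simp: mod2_def)
  moreover have "bd d (mod2 U) = (\<lambda>_. 0)"
    using bd_mod2[of U d] assms(3,4) by (simp add: lchain_def mod2_def)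
  moreover have "2 * FV d T - mass d U \<le> NOA d (mod2 U)"
    unfolding NOA_def
  proof (rule cInf_greatest)
    show "{mass d R |R. lchain d R \<and> bd d R = (\<lambda>_. 0) \<and> mod2 R = mod2 U} \<noteq> {}"
      using exists_pseudo_orientation[OF assms] by blast
  next
    fix x assume "x \<in> {mass d R |R. lchain d R \<and> bd d R = (\<lambda>_. 0) \<and> mod2 R = mod2 U}"
    then show "2 * FV d T - mass d U \<le> x"
      using FV_le_mean_mass[OF assms(3,4)] by fastforce
  qed
  ultimately show ?thesis by simp
qed

end
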